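(* Let $R\subseteq S$ be integral domains and let $\mathbf A$ be a matrix with entries in $R$. Then $\mathbf A$ satisfies the columns condition as a matrix with entries in $R$ if and only if it satisfies the columns condition as a matrix with entries in $S$.
   Context: Columns condition: for a $k\times l$ matrix over a domain $D$ with fraction field $K$ and columns $\mathbf c_1,\dots,\mathbf c_l\in D^k$, it holds if there exist an integer $m\ge0$ and a partition $\{1,\dots,l\}=I_0\cup\dots\cup I_m$ such that $\sum_{i\in I_0}\mathbf c_i=0$ and for each $t\in\{1,\dots,m\}$, $\sum_{i\in I_t}\mathbf c_i$ lies in the $K$-vector space spanned by the $\mathbf c_j$ with $j\in I_0\cup\dots\cup I_{t-1}$. *)

theory Defs
  imports "HOL-Computational_Algebra.Fraction_Field"
begin

text \<open>A k x l matrix over a domain D is a function nat => nat => D (row r < k, column i < l;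
  columns indexed by 0..<l). The fraction field K of D is the type D fract, with canonical
  embedding x |-> Fract x 1. The columns condition: there exist m and a partition
  I 0, ..., I m of the column indices such that the columns indexed by I 0 sum to zero,
  and for each t in 1..m the sum of the columns indexed by I t is a K-linear combination
  of the columns indexed by I 0 u ... u I (t-1).\<close>

definition columns_condition :: "nat \<Rightarrow> nat \<Rightarrow> (nat \<Rightarrow> nat \<Rightarrow> 'a::idom) \<Rightarrow> bool" where
  "columns_condition k l A \<longleftrightarrow>
     (\<exists>(m::nat) (I::nat \<Rightarrow> nat set).
        (\<Union>t\<in>{..m}. I t) = {..<l} \<and>
        (\<forall>s\<le>m. \<forall>t\<le>m. s \<noteq> t \<longrightarrow> I s \<inter> I t = {}) \<and>
        (\<forall>r<k. (\<Sum>i\<in>I 0. A r i) = 0) \<and>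
        (\<forall>t\<in>{1..m}. \<exists>c::nat \<Rightarrow> 'a fract.
            \<forall>r<k. Fract (\<Sum>i\<in>I t. A r i) 1 = (\<Sum>j\<in>(\<Union>s<t. I s). c j * Fract (A r j) 1)))"

end

theory Submission
  imports Defs HOL.Vector_Spaces
begin

text \<open>The embedding of R into S extends to an embedding of the fraction field K of R into the
  fraction field L of S, under which the spanning clause over R becomes the spanning clause over S:
  both ask that the same linear system with coefficients in K be solvable, over K resp. over L.
  A solution over K is one over L. Conversely, L is a K-vector space, and a K-linear functional
  g on L with g 1 = 1 (extend the independent set {1} to a basis) maps a solution over L to one
  over K.\<close>

locale ring_hom =
  fixes hom :: "'a::comm_ring_1 \<Rightarrow> 'b::comm_ring_1"
  assumes hom_1: "hom 1 = 1"
    and hom_add: "hom (x + y) = hom x + hom y"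
    and hom_mult: "hom (x * y) = hom x * hom y"
begin

lemma hom_0: "hom 0 = 0"
  using hom_add[of 0 0] by simp

lemma hom_sum: "hom (\<Sum>i\<in>S. g i) = (\<Sum>i\<in>S. hom (g i))"
  by (induction S rule: infinite_finite_induct) (simp_all add: hom_0 hom_add)

end

locale field_hom = ring_hom hom for hom :: "'a::field \<Rightarrow> 'b::field"
begin

lemma linear_retraction:
  obtains g :: "'b \<Rightarrow> 'a" where "Vector_Spaces.linear (\<lambda>a y. hom a * y) (*) g" and "g 1 = 1"
proof -
  interpret vector_space_pair "\<lambda>a y. hom a * y" "(*) :: 'a \<Rightarrow> 'a \<Rightarrow> 'a"
    by unfold_locales (auto simp: algebra_simps hom_1 hom_add hom_mult)
  have "vs1.independent {1}"
    by simp
  from linear_independent_extend[OF this, of "\<lambda>_. 1"] show thesis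
    using that by auto
qed

lemma linear_system_solvable_iff_hom:
  "(\<exists>c. \<forall>r\<in>R. w r = (\<Sum>j\<in>J. c j * v r j)) \<longleftrightarrow>
   (\<exists>c. \<forall>r\<in>R. hom (w r) = (\<Sum>j\<in>J. c j * hom (v r j)))"
proof
  assume "\<exists>c. \<forall>r\<in>R. w r = (\<Sum>j\<in>J. c j * v r j)"
  then obtain c where "\<forall>r\<in>R. w r = (\<Sum>j\<in>J. c j * v r j)"
    by blast
  then have "\<forall>r\<in>R. hom (w r) = (\<Sum>j\<in>J. hom (c j) * hom (v r j))"
    by (simp add: hom_sum hom_mult)
  then show "\<exists>c. \<forall>r\<in>R. hom (w r) = (\<Sum>j\<in>J. c j * hom (v r j))"
    by (rule exI[of _ "\<lambda>j. hom (c j)"])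
next
  obtain g where "Vector_Spaces.linear (\<lambda>a y. hom a * y) (*) g" and g_1: "g 1 = 1"
    by (rule linear_retraction)
  then interpret g: module_hom "\<lambda>a y. hom a * y" "(*)" g
    by (simp add: module_hom_iff_linear)
  have g_hom: "g (hom a) = a" for a
    using g.scale[of a 1] g_1 by simp
  assume "\<exists>c. \<forall>r\<in>R. hom (w r) = (\<Sum>j\<in>J. c j * hom (v r j))"
  then obtain c where c: "\<forall>r\<in>R. hom (w r) = (\<Sum>j\<in>J. c j * hom (v r j))"
    by blast
  have "w r = (\<Sum>j\<in>J. g (c j) * v r j)" if "r \<in> R" for r
  proof -
    have "w r = g (hom (w r))"
      by (simp add: g_hom)
    also have "\<dots> = g (\<Sum>j\<in>J. hom (v r j) * c j)"
      using c that by (simp add: mult.commute)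
    also have "\<dots> = (\<Sum>j\<in>J. v r j * g (c j))"
      by (simp add: g.sum g.scale)
    also have "\<dots> = (\<Sum>j\<in>J. g (c j) * v r j)"
      by (simp add: mult.commute)
    finally show ?thesis .
  qed
  then show "\<exists>c. \<forall>r\<in>R. w r = (\<Sum>j\<in>J. c j * v r j)"
    by (intro exI[of _ "\<lambda>j. g (c j)"] ballI)
qed

end

locale idom_embedding = ring_hom hom for hom :: "'a::idom \<Rightarrow> 'b::idom" +
  assumes inj: "inj hom"
begin

lemma hom_eq_0_iff: "hom x = 0 \<longleftrightarrow> x = 0"
  using inj hom_0 by (metis injD)

definition map_fract :: "'a fract \<Rightarrow> 'b fract" where
  "map_fract q = (SOME y. \<exists>a b. b \<noteq> 0 \<and> q = Fract a b \<and> y = Fract (hom a) (hom b))"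

lemma map_fract_Fract:
  assumes "b \<noteq> 0"
  shows "map_fract (Fract a b) = Fract (hom a) (hom b)"
proof -
  have "\<exists>a' b'. b' \<noteq> 0 \<and> Fract a b = Fract a' b' \<and>
      map_fract (Fract a b) = Fract (hom a') (hom b')"
    unfolding map_fract_def by (rule someI_ex) (use assms in blast)
  then obtain a' b' where "b' \<noteq> 0" and "Fract a b = Fract a' b'"
    and map_eq: "map_fract (Fract a b) = Fract (hom a') (hom b')"
    by blast
  then have "a * b' = a' * b"
    using assms by (simp add: eq_fract)
  then have "hom a * hom b' = hom a' * hom b"
    by (metis hom_mult)
  then show ?thesis
    using map_eq assms \<open>b' \<noteq> 0\<close> by (simp add: eq_fract hom_eq_0_iff)
qed

sublocale map_fract: field_hom map_fract
proof
  show "map_fract 1 = 1"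
    using map_fract_Fract[of 1 1] by (simp add: hom_1 One_fract_def)
next
  fix x y :: "'a fract"
  show "map_fract (x + y) = map_fract x + map_fract y"
    and "map_fract (x * y) = map_fract x * map_fract y"
    by (cases x; cases y; simp add: map_fract_Fract hom_eq_0_iff hom_add hom_mult)+
qed

end

theorem lemma3p1:
  fixes f :: "'r::idom \<Rightarrow> 's::idom"
    and A :: "nat \<Rightarrow> nat \<Rightarrow> 'r"
    and k l :: nat
  assumes "inj f"
    and "f 0 = 0" and "f 1 = 1"
    and "\<And>x y. f (x + y) = f x + f y"
    and "\<And>x y. f (x * y) = f x * f y"
  shows "columns_condition k l A \<longleftrightarrow> columns_condition k l (\<lambda>r i. f (A r i))"
proof -
  interpret idom_embedding f
    using assms by unfold_locales
  have sum_eq_0_iff: "(\<Sum>i\<in>S. A r i) = 0 \<longleftrightarrow> (\<Sum>i\<in>S. f (A r i)) = 0" for S r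
    by (simp add: hom_sum[symmetric] hom_eq_0_iff)
  have solvable_iff:
    "(\<exists>c. \<forall>r<k. Fract (\<Sum>i\<in>S. A r i) 1 = (\<Sum>j\<in>J. c j * Fract (A r j) 1)) \<longleftrightarrow>
     (\<exists>c. \<forall>r<k. Fract (\<Sum>i\<in>S. f (A r i)) 1 = (\<Sum>j\<in>J. c j * Fract (f (A r j)) 1))" for S J
    using map_fract.linear_system_solvable_iff_hom[where R = "{r. r < k}" and J = J
        and w = "\<lambda>r. Fract (\<Sum>i\<in>S. A r i) 1" and v = "\<lambda>r j. Fract (A r j) 1"]
    by (simp add: map_fract_Fract hom_sum hom_1)
  show ?thesis
    unfolding columns_condition_def sum_eq_0_iff solvable_iff ..
qed

end
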